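(* Let $\mathcal C$ be a hyper-extensive category and $H\colon\mathcal C\to\mathcal C$ a functor preserving countable coproducts and having a terminal coalgebra. Then $H$ is a cia functor: every corecursive $H$-algebra is a cia. Hence the category of corecursive $H$-algebras coincides with the category of cias for $H$ (both as full subcategories of the category of $H$-algebras).
   Context: Hyper-extensive category: countable coproducts that are universal (pullbacks along arbitrary morphisms exist and preserve them), disjoint (injections monic, pairwise pullbacks initial), and coherent (a countable family of pairwise disjoint coproduct injections into $A$ has copairing a coproduct injection). An $H$-algebra $a\colon HA\to A$ is corecursive if for every coalgebra $e\colon X\to HX$ there is a unique $s\colon X\to A$ with $s=a\cdot Hs\cdot e$. It is a cia if for every $e\colon X\to HX+A$ there is a unique $s\colon X\to A$ with $s=[a,\mathrm{id}_A]\cdot(Hs+\mathrm{id}_A)\cdot e$. A functor is a cia functor if every corecursive algebra for it is a cia. *)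

theory Defs
  imports Main
begin

record ('o, 'm) cat =
  Ob  :: "'o set"
  Ar  :: "'m set"
  Dom :: "'m \<Rightarrow> 'o"
  Cod :: "'m \<Rightarrow> 'o"
  Cmp :: "'m \<Rightarrow> 'm \<Rightarrow> 'm"   (* Cmp C g f  =  g \<circ> f, defined when Cod f = Dom g *)
  Idt :: "'o \<Rightarrow> 'm"

definition hom :: "('o, 'm) cat \<Rightarrow> 'o \<Rightarrow> 'o \<Rightarrow> 'm set" where
  "hom C a b = {f \<in> Ar C. Dom C f = a \<and> Cod C f = b}"

definition is_category :: "('o, 'm) cat \<Rightarrow> bool" where
  "is_category C \<longleftrightarrow>
     (\<forall>f\<in>Ar C. Dom C f \<in> Ob C \<and> Cod C f \<in> Ob C) \<and>
     (\<forall>a\<in>Ob C. Idt C a \<in> hom C a a) \<and>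
     (\<forall>a b c f g. f \<in> hom C a b \<longrightarrow> g \<in> hom C b c \<longrightarrow> Cmp C g f \<in> hom C a c) \<and>
     (\<forall>a b c d f g h. f \<in> hom C a b \<longrightarrow> g \<in> hom C b c \<longrightarrow> h \<in> hom C c d \<longrightarrow>
        Cmp C h (Cmp C g f) = Cmp C (Cmp C h g) f) \<and>
     (\<forall>a b f. f \<in> hom C a b \<longrightarrow> Cmp C f (Idt C a) = f \<and> Cmp C (Idt C b) f = f)"

definition is_endofunctor :: "('o, 'm) cat \<Rightarrow> ('o \<Rightarrow> 'o) \<Rightarrow> ('m \<Rightarrow> 'm) \<Rightarrow> bool" where
  "is_endofunctor C FO FA \<longleftrightarrow>
     (\<forall>a\<in>Ob C. FO a \<in> Ob C) \<and>
     (\<forall>a b f. f \<in> hom C a b \<longrightarrow> FA f \<in> hom C (FO a) (FO b)) \<and>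
     (\<forall>a\<in>Ob C. FA (Idt C a) = Idt C (FO a)) \<and>
     (\<forall>a b c f g. f \<in> hom C a b \<longrightarrow> g \<in> hom C b c \<longrightarrow> FA (Cmp C g f) = Cmp C (FA g) (FA f))"

definition is_initial :: "('o, 'm) cat \<Rightarrow> 'o \<Rightarrow> bool" where
  "is_initial C Z \<longleftrightarrow> Z \<in> Ob C \<and> (\<forall>Q\<in>Ob C. \<exists>!u. u \<in> hom C Z Q)"

definition is_mono :: "('o, 'm) cat \<Rightarrow> 'm \<Rightarrow> bool" where
  "is_mono C m \<longleftrightarrow> m \<in> Ar C \<and>
     (\<forall>g h. g \<in> Ar C \<longrightarrow> h \<in> Ar C \<longrightarrow> Cod C g = Dom C m \<longrightarrow> Cod C h = Dom C m \<longrightarrow>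
        Dom C g = Dom C h \<longrightarrow> Cmp C m g = Cmp C m h \<longrightarrow> g = h)"

text \<open>Coproduct of a family X indexed by a set I of naturals (every countable family
  can be so indexed), with apex P and injections \<iota>.\<close>
definition is_coproduct ::
  "('o, 'm) cat \<Rightarrow> nat set \<Rightarrow> (nat \<Rightarrow> 'o) \<Rightarrow> 'o \<Rightarrow> (nat \<Rightarrow> 'm) \<Rightarrow> bool" where
  "is_coproduct C I X P \<iota> \<longleftrightarrow>
     P \<in> Ob C \<and> (\<forall>i\<in>I. X i \<in> Ob C \<and> \<iota> i \<in> hom C (X i) P) \<and>
     (\<forall>Q f. Q \<in> Ob C \<longrightarrow> (\<forall>i\<in>I. f i \<in> hom C (X i) Q) \<longrightarrow>
        (\<exists>!u. u \<in> hom C P Q \<and> (\<forall>i\<in>I. Cmp C u (\<iota> i) = f i)))"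

definition has_countable_coproducts :: "('o, 'm) cat \<Rightarrow> bool" where
  "has_countable_coproducts C \<longleftrightarrow>
     (\<forall>(I::nat set) X. (\<forall>i\<in>I. X i \<in> Ob C) \<longrightarrow> (\<exists>P \<iota>. is_coproduct C I X P \<iota>))"

definition is_pullback :: "('o, 'm) cat \<Rightarrow> 'm \<Rightarrow> 'm \<Rightarrow> 'o \<Rightarrow> 'm \<Rightarrow> 'm \<Rightarrow> bool" where
  "is_pullback C f g P p q \<longleftrightarrow>
     f \<in> Ar C \<and> g \<in> Ar C \<and> Cod C f = Cod C g \<and>
     P \<in> Ob C \<and> p \<in> hom C P (Dom C f) \<and> q \<in> hom C P (Dom C g) \<and>
     Cmp C f p = Cmp C g q \<and>
     (\<forall>W x y. x \<in> hom C W (Dom C f) \<longrightarrow> y \<in> hom C W (Dom C g) \<longrightarrow> Cmp C f x = Cmp C g y \<longrightarrow>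
        (\<exists>!u. u \<in> hom C W P \<and> Cmp C p u = x \<and> Cmp C q u = y))"

definition coproducts_universal :: "('o, 'm) cat \<Rightarrow> bool" where
  "coproducts_universal C \<longleftrightarrow>
     (\<forall>I X P \<iota> B f. is_coproduct C I X P \<iota> \<longrightarrow> f \<in> hom C B P \<longrightarrow>
        (\<exists>Y p q. \<forall>i\<in>I. is_pullback C (\<iota> i) f (Y i) (p i) (q i)) \<and>
        (\<forall>Y p q. (\<forall>i\<in>I. is_pullback C (\<iota> i) f (Y i) (p i) (q i)) \<longrightarrow>
           is_coproduct C I Y B q))"

definition coproducts_disjoint :: "('o, 'm) cat \<Rightarrow> bool" where
  "coproducts_disjoint C \<longleftrightarrow>
     (\<forall>I X P \<iota>. is_coproduct C I X P \<iota> \<longrightarrow>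
        (\<forall>i\<in>I. is_mono C (\<iota> i)) \<and>
        (\<forall>i\<in>I. \<forall>j\<in>I. i \<noteq> j \<longrightarrow>
           (\<exists>Z p q. is_pullback C (\<iota> i) (\<iota> j) Z p q) \<and>
           (\<forall>Z p q. is_pullback C (\<iota> i) (\<iota> j) Z p q \<longrightarrow> is_initial C Z)))"

definition is_coproduct_injection :: "('o, 'm) cat \<Rightarrow> 'm \<Rightarrow> bool" where
  "is_coproduct_injection C m \<longleftrightarrow> m \<in> Ar C \<and>
     (\<exists>B n. is_coproduct C {0, 1} (\<lambda>i. if i = 0 then Dom C m else B) (Cod C m)
                          (\<lambda>i. if i = 0 then m else n))"

definition disjoint_morphs :: "('o, 'm) cat \<Rightarrow> 'm \<Rightarrow> 'm \<Rightarrow> bool" where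
  "disjoint_morphs C f g \<longleftrightarrow> (\<exists>Z p q. is_pullback C f g Z p q \<and> is_initial C Z)"

definition coproducts_coherent :: "('o, 'm) cat \<Rightarrow> bool" where
  "coproducts_coherent C \<longleftrightarrow>
     (\<forall>I B P \<iota> A m u. is_coproduct C I B P \<iota> \<longrightarrow> A \<in> Ob C \<longrightarrow>
        (\<forall>i\<in>I. m i \<in> hom C (B i) A \<and> is_coproduct_injection C (m i)) \<longrightarrow>
        (\<forall>i\<in>I. \<forall>j\<in>I. i \<noteq> j \<longrightarrow> disjoint_morphs C (m i) (m j)) \<longrightarrow>
        u \<in> hom C P A \<longrightarrow> (\<forall>i\<in>I. Cmp C u (\<iota> i) = m i) \<longrightarrow>
        is_coproduct_injection C u)"

definition hyper_extensive :: "('o, 'm) cat \<Rightarrow> bool" where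
  "hyper_extensive C \<longleftrightarrow> is_category C \<and> has_countable_coproducts C \<and>
     coproducts_universal C \<and> coproducts_disjoint C \<and> coproducts_coherent C"

definition preserves_countable_coproducts ::
  "('o, 'm) cat \<Rightarrow> ('o \<Rightarrow> 'o) \<Rightarrow> ('m \<Rightarrow> 'm) \<Rightarrow> bool" where
  "preserves_countable_coproducts C FO FA \<longleftrightarrow>
     (\<forall>I X P \<iota>. is_coproduct C I X P \<iota> \<longrightarrow>
        is_coproduct C I (\<lambda>i. FO (X i)) (FO P) (\<lambda>i. FA (\<iota> i)))"

definition has_terminal_coalgebra :: "('o, 'm) cat \<Rightarrow> ('o \<Rightarrow> 'o) \<Rightarrow> ('m \<Rightarrow> 'm) \<Rightarrow> bool" where
  "has_terminal_coalgebra C FO FA \<longleftrightarrow>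
     (\<exists>T t. T \<in> Ob C \<and> t \<in> hom C T (FO T) \<and>
        (\<forall>X e. X \<in> Ob C \<longrightarrow> e \<in> hom C X (FO X) \<longrightarrow>
           (\<exists>!h. h \<in> hom C X T \<and> Cmp C t h = Cmp C (FA h) e)))"

definition corecursive :: "('o, 'm) cat \<Rightarrow> ('o \<Rightarrow> 'o) \<Rightarrow> ('m \<Rightarrow> 'm) \<Rightarrow> 'o \<Rightarrow> 'm \<Rightarrow> bool" where
  "corecursive C FO FA A a \<longleftrightarrow>
     (\<forall>X e. X \<in> Ob C \<longrightarrow> e \<in> hom C X (FO X) \<longrightarrow>
        (\<exists>!s. s \<in> hom C X A \<and> s = Cmp C a (Cmp C (FA s) e)))"

text \<open>For e : X \<rightarrow> HX + A (HX + A any binary coproduct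
  with injections \<iota> 0, \<iota> 1), the map [a, id] \<cdot> (Hs + id) : HX + A \<rightarrow> A is the
  unique u with u \<cdot> \<iota> 0 = a \<cdot> Hs and u \<cdot> \<iota> 1 = id.\<close>
definition is_cia :: "('o, 'm) cat \<Rightarrow> ('o \<Rightarrow> 'o) \<Rightarrow> ('m \<Rightarrow> 'm) \<Rightarrow> 'o \<Rightarrow> 'm \<Rightarrow> bool" where
  "is_cia C FO FA A a \<longleftrightarrow>
     (\<forall>X S \<iota> e. X \<in> Ob C \<longrightarrow>
        is_coproduct C {0, 1} (\<lambda>i. if i = 0 then FO X else A) S \<iota> \<longrightarrow>
        e \<in> hom C X S \<longrightarrow>
        (\<exists>!s. s \<in> hom C X A \<and>
           (\<forall>u. u \<in> hom C S A \<longrightarrow> Cmp C u (\<iota> 0) = Cmp C a (FA s) \<longrightarrow>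
                Cmp C u (\<iota> 1) = Idt C A \<longrightarrow> s = Cmp C u e)))"

end

theory Submission
  imports Defs
begin

text \<open>Let a : HA \<rightarrow> A be corecursive and e : X \<rightarrow> HX + A. Pulling HX + A back along e
  splits X = XH + XA, with eH : XH \<rightarrow> HX and eA : XA \<rightarrow> A. The layers X_0 = XA and
  X_(n+1) = eH^-1(H X_n) are pairwise disjoint summands of X, because H preserves
  coproducts and with them the disjointness of summands. By coherence their coproduct is a
  summand of X; its complement Z never reaches a layer, so eH maps Z into HZ. A solution of e
  is therefore forced on the layers by recursion on n and on Z by corecursivity of a, and since
  the layers and Z cover X it exists and is unique. Conversely, a cia is corecursive: take
  e = inl \<cdot> e0.\<close>

section \<open>Categories and coproducts\<close>

locale category =
  fixes C :: "('o, 'm) cat"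
  assumes is_category: "is_category C"
begin

abbreviation comp (infixr "\<cdot>" 55) where "g \<cdot> f \<equiv> Cmp C g f"

lemma homD: "f \<in> hom C a b \<Longrightarrow> f \<in> Ar C \<and> Dom C f = a \<and> Cod C f = b"
  by (simp add: hom_def)

lemma hom_ob: "f \<in> hom C a b \<Longrightarrow> a \<in> Ob C \<and> b \<in> Ob C"
  using is_category by (auto simp: is_category_def hom_def)

lemma comp_hom: "f \<in> hom C a b \<Longrightarrow> g \<in> hom C b c \<Longrightarrow> g \<cdot> f \<in> hom C a c"
  using is_category unfolding is_category_def by blast

lemma comp_Ar_Dom_Cod [simp]:
  assumes "f \<in> Ar C" "g \<in> Ar C" "Cod C f = Dom C g"
  shows "g \<cdot> f \<in> Ar C" "Dom C (g \<cdot> f) = Dom C f" "Cod C (g \<cdot> f) = Cod C g"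
  using comp_hom[of f "Dom C f" "Cod C f" g "Cod C g"] assms by (simp_all add: hom_def)

lemma assoc [simp]:
  "f \<in> Ar C \<Longrightarrow> g \<in> Ar C \<Longrightarrow> h \<in> Ar C \<Longrightarrow> Cod C f = Dom C g \<Longrightarrow> Cod C g = Dom C h
   \<Longrightarrow> (h \<cdot> g) \<cdot> f = h \<cdot> g \<cdot> f"
proof -
  assume "f \<in> Ar C" "g \<in> Ar C" "h \<in> Ar C" "Cod C f = Dom C g" "Cod C g = Dom C h"
  then have "f \<in> hom C (Dom C f) (Dom C g)" "g \<in> hom C (Dom C g) (Dom C h)" "h \<in> hom C (Dom C h) (Cod C h)"
    by (simp_all add: hom_def)
  then show ?thesis
    using is_category unfolding is_category_def by metis
qed

lemma id_hom: "a \<in> Ob C \<Longrightarrow> Idt C a \<in> hom C a a"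
  using is_category unfolding is_category_def by blast

lemma id_Ar_Dom_Cod [simp]:
  "a \<in> Ob C \<Longrightarrow> Idt C a \<in> Ar C" "a \<in> Ob C \<Longrightarrow> Dom C (Idt C a) = a" "a \<in> Ob C \<Longrightarrow> Cod C (Idt C a) = a"
  using id_hom homD by blast+

lemma comp_square:
  assumes "g \<cdot> f = k \<cdot> h" "x \<in> hom C w a" "f \<in> hom C a b" "g \<in> hom C b c" "h \<in> hom C a b'" "k \<in> hom C b' c"
  shows "g \<cdot> f \<cdot> x = k \<cdot> h \<cdot> x"
  using arg_cong[OF assms(1), of "\<lambda>t. t \<cdot> x"] assms(2-) by (simp add: hom_def)

lemma comp_id [simp]:
  "f \<in> Ar C \<Longrightarrow> Dom C f = a \<Longrightarrow> f \<cdot> Idt C a = f"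
  "f \<in> Ar C \<Longrightarrow> Cod C f = b \<Longrightarrow> Idt C b \<cdot> f = f"
proof -
  have "f \<in> Ar C \<Longrightarrow> f \<in> hom C (Dom C f) (Cod C f)" by (simp add: hom_def)
  then show "f \<in> Ar C \<Longrightarrow> Dom C f = a \<Longrightarrow> f \<cdot> Idt C a = f"
    and "f \<in> Ar C \<Longrightarrow> Cod C f = b \<Longrightarrow> Idt C b \<cdot> f = f"
    using is_category unfolding is_category_def by blast+
qed

end

abbreviation binary_coproduct :: "('o, 'm) cat \<Rightarrow> 'o \<Rightarrow> 'o \<Rightarrow> 'o \<Rightarrow> 'm \<Rightarrow> 'm \<Rightarrow> bool" where
  "binary_coproduct C A B P i0 i1 \<equiv>
     is_coproduct C {0, 1} (\<lambda>i. if i = 0 then A else B) P (\<lambda>i. if i = 0 then i0 else i1)"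

context category
begin

lemma coproduct_ob: "is_coproduct C I X P \<iota> \<Longrightarrow> P \<in> Ob C"
  by (simp add: is_coproduct_def)

lemma coproduct_in_hom: "is_coproduct C I X P \<iota> \<Longrightarrow> i \<in> I \<Longrightarrow> \<iota> i \<in> hom C (X i) P"
  by (simp add: is_coproduct_def)

lemma coproduct_copairing:
  "is_coproduct C I X P \<iota> \<Longrightarrow> Q \<in> Ob C \<Longrightarrow> (\<And>i. i \<in> I \<Longrightarrow> f i \<in> hom C (X i) Q) \<Longrightarrow>
   \<exists>u. u \<in> hom C P Q \<and> (\<forall>i\<in>I. u \<cdot> \<iota> i = f i)"
  unfolding is_coproduct_def by blast

lemma coproduct_eqI:
  assumes cp: "is_coproduct C I X P \<iota>" and u: "u \<in> hom C P Q" and v: "v \<in> hom C P Q"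
    and eq: "\<And>i. i \<in> I \<Longrightarrow> u \<cdot> \<iota> i = v \<cdot> \<iota> i"
  shows "u = v"
proof -
  have universal: "\<forall>Q f. Q \<in> Ob C \<longrightarrow> (\<forall>i\<in>I. f i \<in> hom C (X i) Q) \<longrightarrow>
      (\<exists>!w. w \<in> hom C P Q \<and> (\<forall>i\<in>I. w \<cdot> \<iota> i = f i))"
    using cp unfolding is_coproduct_def by blast
  have "\<forall>i\<in>I. v \<cdot> \<iota> i \<in> hom C (X i) Q"
    using coproduct_in_hom[OF cp] comp_hom v by blast
  then have "\<exists>!w. w \<in> hom C P Q \<and> (\<forall>i\<in>I. w \<cdot> \<iota> i = v \<cdot> \<iota> i)"
    using universal[rule_format, of Q "\<lambda>i. v \<cdot> \<iota> i"] hom_ob[OF u] by blast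
  then show "u = v" using u v eq by blast
qed

lemma coproduct_cong:
  "is_coproduct C I X P \<iota> \<Longrightarrow> (\<And>i. i \<in> I \<Longrightarrow> X i = X' i) \<Longrightarrow> (\<And>i. i \<in> I \<Longrightarrow> \<iota> i = \<iota>' i)
   \<Longrightarrow> is_coproduct C I X' P \<iota>'"
  unfolding is_coproduct_def by simp

lemma binary_coproduct_in0: "binary_coproduct C A B P i0 i1 \<Longrightarrow> i0 \<in> hom C A P"
  using coproduct_in_hom[of "{0,1}" _ P _ 0] by fastforce

lemma binary_coproduct_in1: "binary_coproduct C A B P i0 i1 \<Longrightarrow> i1 \<in> hom C B P"
  using coproduct_in_hom[of "{0,1}" _ P _ 1] by fastforce

lemma binary_coproduct_copairing:
  assumes cp: "binary_coproduct C A B P i0 i1" and f0: "f0 \<in> hom C A Q" and f1: "f1 \<in> hom C B Q"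
  shows "\<exists>u. u \<in> hom C P Q \<and> u \<cdot> i0 = f0 \<and> u \<cdot> i1 = f1"
proof -
  have Q: "Q \<in> Ob C" using hom_ob[OF f0] by blast
  have "\<And>i. i \<in> {0::nat, 1} \<Longrightarrow> (if i = 0 then f0 else f1) \<in> hom C (if i = 0 then A else B) Q"
    using f0 f1 by auto
  from coproduct_copairing[OF cp Q this] show ?thesis by auto
qed

lemma binary_coproduct_eqI:
  "binary_coproduct C A B P i0 i1 \<Longrightarrow> u \<in> hom C P Q \<Longrightarrow> v \<in> hom C P Q \<Longrightarrow>
   u \<cdot> i0 = v \<cdot> i0 \<Longrightarrow> u \<cdot> i1 = v \<cdot> i1 \<Longrightarrow> u = v"
  by (erule coproduct_eqI) auto

lemma binary_coproductI:
  assumes P: "P \<in> Ob C" and i0: "i0 \<in> hom C A P" and i1: "i1 \<in> hom C B P"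
    and copairing: "\<And>Q f0 f1. f0 \<in> hom C A Q \<Longrightarrow> f1 \<in> hom C B Q \<Longrightarrow>
       \<exists>u. u \<in> hom C P Q \<and> u \<cdot> i0 = f0 \<and> u \<cdot> i1 = f1"
    and eqI: "\<And>Q u v. u \<in> hom C P Q \<Longrightarrow> v \<in> hom C P Q \<Longrightarrow> u \<cdot> i0 = v \<cdot> i0 \<Longrightarrow> u \<cdot> i1 = v \<cdot> i1 \<Longrightarrow> u = v"
  shows "binary_coproduct C A B P i0 i1"
  unfolding is_coproduct_def
proof (intro conjI allI impI)
  show "P \<in> Ob C" by fact
  show "\<forall>i\<in>{0,1}. (if i = 0 then A else B) \<in> Ob C \<and> (if i = 0 then i0 else i1) \<in> hom C (if i = 0 then A else B) P"
    using i0 i1 hom_ob by auto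
next
  fix Q f assume "Q \<in> Ob C" and f: "\<forall>i\<in>{0::nat,1}. f i \<in> hom C (if i = 0 then A else B) Q"
  then obtain u where u: "u \<in> hom C P Q" "u \<cdot> i0 = f 0" "u \<cdot> i1 = f 1"
    using copairing[of "f 0" Q "f 1"] by auto
  show "\<exists>!u. u \<in> hom C P Q \<and> (\<forall>i\<in>{0,1}. u \<cdot> (if i = 0 then i0 else i1) = f i)"
  proof (rule ex1I[of _ u])
    show "u \<in> hom C P Q \<and> (\<forall>i\<in>{0,1}. u \<cdot> (if i = 0 then i0 else i1) = f i)" using u by auto
  next
    fix v assume "v \<in> hom C P Q \<and> (\<forall>i\<in>{0::nat,1}. v \<cdot> (if i = 0 then i0 else i1) = f i)"
    then show "v = u" using eqI[of v Q u] u by auto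
  qed
qed

lemma binary_coproduct_swap:
  assumes cp: "binary_coproduct C A B P i0 i1"
  shows "binary_coproduct C B A P i1 i0"
proof (rule binary_coproductI)
  show "P \<in> Ob C" using coproduct_ob[OF cp] .
  show "i1 \<in> hom C B P" "i0 \<in> hom C A P"
    using binary_coproduct_in1[OF cp] binary_coproduct_in0[OF cp] .
next
  fix Q f0 f1 assume "f0 \<in> hom C B Q" "f1 \<in> hom C A Q"
  then show "\<exists>u. u \<in> hom C P Q \<and> u \<cdot> i1 = f0 \<and> u \<cdot> i0 = f1"
    using binary_coproduct_copairing[OF cp] by blast
next
  fix Q u v assume "u \<in> hom C P Q" "v \<in> hom C P Q" "u \<cdot> i1 = v \<cdot> i1" "u \<cdot> i0 = v \<cdot> i0"
  then show "u = v" using binary_coproduct_eqI[OF cp] by blast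
qed

lemma binary_coproduct_in0_injection: "binary_coproduct C A B P i0 i1 \<Longrightarrow> is_coproduct_injection C i0"
  unfolding is_coproduct_injection_def using binary_coproduct_in0 homD by metis

lemma coproduct_split_off_summand:
  assumes cp: "is_coproduct C I X P \<iota>" and i: "i \<in> I" and cpR: "is_coproduct C (I - {i}) X R \<kappa>"
    and r: "r \<in> hom C R P" "\<forall>j\<in>I - {i}. r \<cdot> \<kappa> j = \<iota> j"
  shows "binary_coproduct C (X i) R P (\<iota> i) r"
proof -
  have \<kappa>: "\<And>j. j \<in> I - {i} \<Longrightarrow> \<kappa> j \<in> hom C (X j) R" using coproduct_in_hom[OF cpR] .
  show ?thesis
  proof (rule binary_coproductI[OF coproduct_ob[OF cp] coproduct_in_hom[OF cp i] r(1)])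
    fix Q f0 f1 assume f0: "f0 \<in> hom C (X i) Q" and f1: "f1 \<in> hom C R Q"
    define g where "g j = (if j = i then f0 else f1 \<cdot> \<kappa> j)" for j
    have "\<And>j. j \<in> I \<Longrightarrow> g j \<in> hom C (X j) Q"
      unfolding g_def using f0 by (auto intro!: comp_hom[OF \<kappa> f1])
    then obtain u where u: "u \<in> hom C P Q" "\<forall>j\<in>I. u \<cdot> \<iota> j = g j"
      using coproduct_copairing[OF cp] hom_ob[OF f0] by blast
    have "u \<cdot> r = f1"
    proof (rule coproduct_eqI[OF cpR comp_hom[OF r(1) u(1)] f1])
      fix j assume j: "j \<in> I - {i}"
      have "(u \<cdot> r) \<cdot> \<kappa> j = u \<cdot> (r \<cdot> \<kappa> j)" using \<kappa>[OF j] r(1) u(1) by (simp add: hom_def)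
      also have "\<dots> = g j" using r(2) u(2) j by auto
      finally show "(u \<cdot> r) \<cdot> \<kappa> j = f1 \<cdot> \<kappa> j" using j by (simp add: g_def)
    qed
    moreover have "u \<cdot> \<iota> i = f0" using u(2) i by (simp add: g_def)
    ultimately show "\<exists>u. u \<in> hom C P Q \<and> u \<cdot> \<iota> i = f0 \<and> u \<cdot> r = f1" using u(1) by blast
  next
    fix Q u v assume u: "u \<in> hom C P Q" and v: "v \<in> hom C P Q"
      and on_i: "u \<cdot> \<iota> i = v \<cdot> \<iota> i" and on_r: "u \<cdot> r = v \<cdot> r"
    show "u = v"
    proof (rule coproduct_eqI[OF cp u v])
      fix j assume j: "j \<in> I"
      show "u \<cdot> \<iota> j = v \<cdot> \<iota> j"
      proof (cases "j = i")
        case False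
        then have j': "j \<in> I - {i}" using j by blast
        have "u \<cdot> \<iota> j = (u \<cdot> r) \<cdot> \<kappa> j" using r \<kappa>[OF j'] u j' by (simp add: hom_def)
        also have "\<dots> = v \<cdot> \<iota> j" using on_r r \<kappa>[OF j'] v j' by (simp add: hom_def)
        finally show ?thesis .
      qed (use on_i in simp)
    qed
  qed
qed

lemma binary_coproduct_assoc:
  assumes cm: "binary_coproduct C A A' B m m'" and cn: "binary_coproduct C B B' D n n'"
    and cR: "binary_coproduct C A' B' R k0 k1"
    and r: "r \<in> hom C R D" "r \<cdot> k0 = n \<cdot> m'" "r \<cdot> k1 = n'"
  shows "binary_coproduct C A R D (n \<cdot> m) r"
proof -
  note hm = binary_coproduct_in0[OF cm] and hm' = binary_coproduct_in1[OF cm]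
    and hn = binary_coproduct_in0[OF cn] and hn' = binary_coproduct_in1[OF cn]
    and hk0 = binary_coproduct_in0[OF cR] and hk1 = binary_coproduct_in1[OF cR]
  show ?thesis
  proof (rule binary_coproductI[OF coproduct_ob[OF cn] comp_hom[OF hm hn] r(1)])
    fix Q f0 f1 assume f0: "f0 \<in> hom C A Q" and f1: "f1 \<in> hom C R Q"
    have g0: "f1 \<cdot> k0 \<in> hom C A' Q" and g1: "f1 \<cdot> k1 \<in> hom C B' Q" using comp_hom f1 hk0 hk1 by auto
    obtain v where v: "v \<in> hom C B Q" "v \<cdot> m = f0" "v \<cdot> m' = f1 \<cdot> k0"
      using binary_coproduct_copairing[OF cm f0 g0] by blast
    obtain u where u: "u \<in> hom C D Q" "u \<cdot> n = v" "u \<cdot> n' = f1 \<cdot> k1"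
      using binary_coproduct_copairing[OF cn v(1) g1] by blast
    have "u \<cdot> (n \<cdot> m) = f0" using u v hm hn by (simp add: hom_def assoc[symmetric] del: assoc)
    moreover have "u \<cdot> r = f1"
    proof (rule binary_coproduct_eqI[OF cR comp_hom[OF r(1) u(1)] f1])
      have "(u \<cdot> r) \<cdot> k0 = u \<cdot> n \<cdot> m'" using u(1) r hm' hn hk0 by (simp add: hom_def)
      also have "\<dots> = (u \<cdot> n) \<cdot> m'" using u(1) hm' hn by (simp add: hom_def)
      finally show "(u \<cdot> r) \<cdot> k0 = f1 \<cdot> k0" using u(2) v(3) by simp
      show "(u \<cdot> r) \<cdot> k1 = f1 \<cdot> k1" using u v r hn' hk1 by (simp add: hom_def)
    qed
    ultimately show "\<exists>u. u \<in> hom C D Q \<and> u \<cdot> (n \<cdot> m) = f0 \<and> u \<cdot> r = f1" using u(1) by blast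
  next
    fix Q u w assume u: "u \<in> hom C D Q" and w: "w \<in> hom C D Q"
      and e0: "u \<cdot> (n \<cdot> m) = w \<cdot> (n \<cdot> m)" and e1: "u \<cdot> r = w \<cdot> r"
    have "u \<cdot> n = w \<cdot> n"
    proof (rule binary_coproduct_eqI[OF cm comp_hom[OF hn u] comp_hom[OF hn w]])
      show "(u \<cdot> n) \<cdot> m = (w \<cdot> n) \<cdot> m" using e0 u w hm hn by (simp add: hom_def)
      have "(u \<cdot> r) \<cdot> k0 = (w \<cdot> r) \<cdot> k0" using e1 by simp
      then show "(u \<cdot> n) \<cdot> m' = (w \<cdot> n) \<cdot> m'" using u w r hm' hn hk0 by (simp add: hom_def)
    qed
    moreover have "(u \<cdot> r) \<cdot> k1 = (w \<cdot> r) \<cdot> k1" using e1 by simp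
    then have "u \<cdot> n' = w \<cdot> n'" using u w r hn' hk1 by (simp add: hom_def)
    ultimately show "u = w" using binary_coproduct_eqI[OF cn u w] by blast
  qed
qed

end

section \<open>Hyper-extensive categories\<close>

locale hyperextensive = category +
  assumes hyper_extensive: "hyper_extensive C"
begin

lemma coproduct_exists: "(\<And>i. i \<in> I \<Longrightarrow> X i \<in> Ob C) \<Longrightarrow> \<exists>P \<iota>. is_coproduct C I X P \<iota>"
  using hyper_extensive unfolding hyper_extensive_def has_countable_coproducts_def by blast

lemma binary_coproduct_exists:
  assumes "A \<in> Ob C" "B \<in> Ob C"
  shows "\<exists>P i0 i1. binary_coproduct C A B P i0 i1"
proof -
  obtain P \<iota> where "is_coproduct C {0::nat, 1} (\<lambda>i. if i = 0 then A else B) P \<iota>"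
    using coproduct_exists[of "{0, 1}" "\<lambda>i. if i = 0 then A else B"] assms by force
  then have "binary_coproduct C A B P (\<iota> 0) (\<iota> 1)" by (rule coproduct_cong) auto
  then show ?thesis by blast
qed

lemma initial_hom_unique: "is_initial C Z \<Longrightarrow> u \<in> hom C Z Q \<Longrightarrow> v \<in> hom C Z Q \<Longrightarrow> u = v"
  unfolding is_initial_def using hom_ob by blast

lemma initial_hom_exists: "is_initial C Z \<Longrightarrow> Q \<in> Ob C \<Longrightarrow> \<exists>u. u \<in> hom C Z Q"
  unfolding is_initial_def by blast

lemma coproduct_pullbacks_exist:
  "is_coproduct C I X P \<iota> \<Longrightarrow> f \<in> hom C B P \<Longrightarrow> \<exists>Y p q. \<forall>i\<in>I. is_pullback C (\<iota> i) f (Y i) (p i) (q i)"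
  using hyper_extensive unfolding hyper_extensive_def coproducts_universal_def by blast

lemma pullback_of_coproduct:
  "is_coproduct C I X P \<iota> \<Longrightarrow> f \<in> hom C B P \<Longrightarrow>
   (\<forall>i\<in>I. is_pullback C (\<iota> i) f (Y i) (p i) (q i)) \<Longrightarrow> is_coproduct C I Y B q"
  using hyper_extensive unfolding hyper_extensive_def coproducts_universal_def by blast

lemma pullbackD:
  "is_pullback C f g P p q \<Longrightarrow> p \<in> hom C P (Dom C f) \<and> q \<in> hom C P (Dom C g) \<and> f \<cdot> p = g \<cdot> q"
  unfolding is_pullback_def by blast

lemma pullback_factor:
  "is_pullback C f g P p q \<Longrightarrow> x \<in> hom C W (Dom C f) \<Longrightarrow> y \<in> hom C W (Dom C g) \<Longrightarrow>
   f \<cdot> x = g \<cdot> y \<Longrightarrow> \<exists>u. u \<in> hom C W P \<and> p \<cdot> u = x \<and> q \<cdot> u = y"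
  unfolding is_pullback_def by blast

text \<open>\<open>W\<close> is the pullback of the empty coproduct \<open>Z\<close> along \<open>w\<close>.\<close>

lemma initial_strict:
  assumes Z: "is_initial C Z" and w: "w \<in> hom C W Z"
  shows "is_initial C W"
proof -
  have "is_coproduct C {} (\<lambda>i. Z) Z (\<lambda>i. w)"
    using Z unfolding is_initial_def is_coproduct_def by auto
  then have "is_coproduct C {} (\<lambda>i. Z) W (\<lambda>i. w)"
    by (rule pullback_of_coproduct[OF _ w]) auto
  then show ?thesis unfolding is_initial_def is_coproduct_def by auto
qed

lemma coproduct_of_initials_initial:
  assumes cp: "is_coproduct C I X P \<iota>" and initial: "\<And>i. i \<in> I \<Longrightarrow> is_initial C (X i)"
  shows "is_initial C P"
  unfolding is_initial_def
proof (intro conjI ballI)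
  show "P \<in> Ob C" using coproduct_ob[OF cp] .
  fix Q assume Q: "Q \<in> Ob C"
  then have "\<forall>i\<in>I. \<exists>f. f \<in> hom C (X i) Q" using initial initial_hom_exists by blast
  then obtain f where "\<And>i. i \<in> I \<Longrightarrow> f i \<in> hom C (X i) Q" by metis
  then obtain u where u: "u \<in> hom C P Q" using coproduct_copairing[OF cp Q] by blast
  show "\<exists>!u. u \<in> hom C P Q"
  proof (rule ex1I[of _ u])
    fix v assume v: "v \<in> hom C P Q"
    show "v = u"
    proof (rule coproduct_eqI[OF cp v u])
      fix i assume i: "i \<in> I"
      show "v \<cdot> \<iota> i = u \<cdot> \<iota> i"
        using initial_hom_unique[OF initial[OF i]] comp_hom[OF coproduct_in_hom[OF cp i]] u v by blast
    qed
  qed (rule u)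
qed

definition disjoint where
  "disjoint f g \<longleftrightarrow> (\<forall>W x y. x \<in> hom C W (Dom C f) \<longrightarrow> y \<in> hom C W (Dom C g) \<longrightarrow>
     f \<cdot> x = g \<cdot> y \<longrightarrow> is_initial C W)"

lemma disjointD:
  "disjoint f g \<Longrightarrow> x \<in> hom C W (Dom C f) \<Longrightarrow> y \<in> hom C W (Dom C g) \<Longrightarrow> f \<cdot> x = g \<cdot> y \<Longrightarrow> is_initial C W"
  unfolding disjoint_def by blast

lemma disjoint_sym: "disjoint f g \<Longrightarrow> disjoint g f"
  unfolding disjoint_def by metis

lemma disjoint_comp_right:
  assumes disj: "disjoint f g" and g: "g \<in> Ar C" and h: "h \<in> hom C V (Dom C g)"
  shows "disjoint f (g \<cdot> h)"
  unfolding disjoint_def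
proof (intro allI impI)
  fix W x y assume x: "x \<in> hom C W (Dom C f)" and y: "y \<in> hom C W (Dom C (g \<cdot> h))"
    and eq: "f \<cdot> x = (g \<cdot> h) \<cdot> y"
  have y': "y \<in> hom C W V" using y g h by (simp add: hom_def)
  have "f \<cdot> x = g \<cdot> (h \<cdot> y)" using eq g h y' by (simp add: hom_def)
  moreover have "h \<cdot> y \<in> hom C W (Dom C g)" using comp_hom[OF y' h] .
  ultimately show "is_initial C W" using disjointD[OF disj x] by blast
qed

lemma coproduct_ins_disjoint:
  assumes cp: "is_coproduct C I X P \<iota>" and ij: "i \<in> I" "j \<in> I" "i \<noteq> j"
  shows "disjoint (\<iota> i) (\<iota> j)"
  unfolding disjoint_def
proof (intro allI impI)
  obtain Z p q where pb: "is_pullback C (\<iota> i) (\<iota> j) Z p q" and Z: "is_initial C Z"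
    using hyper_extensive cp ij unfolding hyper_extensive_def coproducts_disjoint_def by blast
  fix W x y assume "x \<in> hom C W (Dom C (\<iota> i))" "y \<in> hom C W (Dom C (\<iota> j))" "\<iota> i \<cdot> x = \<iota> j \<cdot> y"
  then obtain u where "u \<in> hom C W Z" using pullback_factor[OF pb] by blast
  then show "is_initial C W" using initial_strict Z by blast
qed

lemma coproduct_in_mono: "is_coproduct C I X P \<iota> \<Longrightarrow> i \<in> I \<Longrightarrow> is_mono C (\<iota> i)"
  using hyper_extensive unfolding hyper_extensive_def coproducts_disjoint_def by blast

lemma monoD:
  "is_mono C m \<Longrightarrow> g \<in> hom C W (Dom C m) \<Longrightarrow> h \<in> hom C W (Dom C m) \<Longrightarrow> m \<cdot> g = m \<cdot> h \<Longrightarrow> g = h"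
  unfolding is_mono_def hom_def by auto

lemma binary_coproduct_ins_disjoint: "binary_coproduct C A B P i0 i1 \<Longrightarrow> disjoint i0 i1"
  using coproduct_ins_disjoint[of "{0,1}" _ P _ 0 1] by fastforce

lemma binary_coproduct_in0_mono: "binary_coproduct C A B P i0 i1 \<Longrightarrow> is_mono C i0"
  using coproduct_in_mono[of "{0,1}" _ P _ 0] by fastforce

lemma binary_coproduct_initial_summand:
  assumes cp: "binary_coproduct C Z0 Z1 Z q0 q1" and Z0: "is_initial C Z0"
  shows "\<exists>r. r \<in> hom C Z Z1 \<and> q1 \<cdot> r = Idt C Z"
proof -
  have q0: "q0 \<in> hom C Z0 Z" and q1: "q1 \<in> hom C Z1 Z"
    using binary_coproduct_in0[OF cp] binary_coproduct_in1[OF cp] .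
  have Z1: "Z1 \<in> Ob C" and Z: "Z \<in> Ob C" using hom_ob q1 by auto
  obtain k where k: "k \<in> hom C Z0 Z1" using initial_hom_exists[OF Z0 Z1] by blast
  obtain r where r: "r \<in> hom C Z Z1" "r \<cdot> q0 = k" "r \<cdot> q1 = Idt C Z1"
    using binary_coproduct_copairing[OF cp k id_hom[OF Z1]] by blast
  have qr: "q1 \<cdot> r \<in> hom C Z Z" using comp_hom r(1) q1 by blast
  have "q1 \<cdot> r = Idt C Z"
  proof (rule binary_coproduct_eqI[OF cp qr id_hom[OF Z]])
    show "(q1 \<cdot> r) \<cdot> q0 = Idt C Z \<cdot> q0"
      using initial_hom_unique[OF Z0] comp_hom qr q0 id_hom[OF Z] by metis
    show "(q1 \<cdot> r) \<cdot> q1 = Idt C Z \<cdot> q1"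
      using r q1 homD[OF q1] homD[OF r(1)] Z1 Z by simp
  qed
  then show ?thesis using r by blast
qed

text \<open>Pulling the coproduct back along \<open>g\<close> splits \<open>V\<close> into an initial part over \<open>A\<close>
  and a part over \<open>B\<close> that is all of \<open>V\<close>.\<close>

lemma factor_through_complement:
  assumes cp: "binary_coproduct C A B P i0 i1" and g: "g \<in> hom C V P" and disj: "disjoint i0 g"
  shows "\<exists>h. h \<in> hom C V B \<and> g = i1 \<cdot> h"
proof -
  obtain Y p q where pb: "\<forall>i\<in>{0::nat,1}. is_pullback C (if i = 0 then i0 else i1) g (Y i) (p i) (q i)"
    using coproduct_pullbacks_exist[OF cp g] by blast
  have "binary_coproduct C (Y 0) (Y 1) V (q 0) (q 1)"
    using pullback_of_coproduct[OF cp g pb] by (rule coproduct_cong) auto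
  moreover have pb0: "is_pullback C i0 g (Y 0) (p 0) (q 0)"
    and pb1: "is_pullback C i1 g (Y 1) (p 1) (q 1)" using pb by auto
  moreover have "is_initial C (Y 0)" using pullbackD[OF pb0] disjointD[OF disj] by blast
  ultimately obtain r where r: "r \<in> hom C V (Y 1)" "q 1 \<cdot> r = Idt C V"
    using binary_coproduct_initial_summand by blast
  have i1: "i1 \<in> hom C B P" using binary_coproduct_in1[OF cp] .
  have p1: "p 1 \<in> hom C (Y 1) B" and q1: "q 1 \<in> hom C (Y 1) V" and sq: "i1 \<cdot> p 1 = g \<cdot> q 1"
    using pullbackD[OF pb1] homD[OF i1] homD[OF g] by auto
  have "g = g \<cdot> (q 1 \<cdot> r)" using r(2) g homD[of g] by simp
  also have "\<dots> = (g \<cdot> q 1) \<cdot> r" using homD[OF g] homD[OF q1] homD[OF r(1)] by simp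
  also have "\<dots> = (i1 \<cdot> p 1) \<cdot> r" using sq by simp
  also have "\<dots> = i1 \<cdot> (p 1 \<cdot> r)" using homD[OF i1] homD[OF p1] homD[OF r(1)] by simp
  finally show ?thesis using comp_hom[OF r(1) p1] by blast
qed

lemma disjoint_copairing:
  assumes cp: "is_coproduct C I Y P \<iota>" and u: "u \<in> hom C P X" and g: "g \<in> Ar C"
    and disj: "\<And>i. i \<in> I \<Longrightarrow> disjoint (u \<cdot> \<iota> i) g"
  shows "disjoint u g"
  unfolding disjoint_def
proof (intro allI impI)
  fix W x y assume x: "x \<in> hom C W (Dom C u)" and y: "y \<in> hom C W (Dom C g)" and eq: "u \<cdot> x = g \<cdot> y"
  have x': "x \<in> hom C W P" using x u by (simp add: hom_def)
  obtain W' p q where pb: "\<forall>i\<in>I. is_pullback C (\<iota> i) x (W' i) (p i) (q i)"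
    using coproduct_pullbacks_exist[OF cp x'] by blast
  have "is_initial C (W' i)" if i: "i \<in> I" for i
  proof -
    have \<iota>: "\<iota> i \<in> hom C (Y i) P" using coproduct_in_hom[OF cp i] .
    have p: "p i \<in> hom C (W' i) (Y i)" and q: "q i \<in> hom C (W' i) W" and sq: "\<iota> i \<cdot> p i = x \<cdot> q i"
      using pullbackD[OF pb[rule_format, OF i]] \<iota> x' by (auto simp: hom_def)
    have "(u \<cdot> \<iota> i) \<cdot> p i = u \<cdot> (\<iota> i \<cdot> p i)" using u \<iota> p by (simp add: hom_def)
    also have "\<dots> = (u \<cdot> x) \<cdot> q i" using sq u x' q by (simp add: hom_def)
    also have "\<dots> = g \<cdot> (y \<cdot> q i)" using eq g y q by (simp add: hom_def)
    finally have "(u \<cdot> \<iota> i) \<cdot> p i = g \<cdot> (y \<cdot> q i)" .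
    moreover have "p i \<in> hom C (W' i) (Dom C (u \<cdot> \<iota> i))" using p u \<iota> by (simp add: hom_def)
    moreover have "y \<cdot> q i \<in> hom C (W' i) (Dom C g)" using comp_hom[OF q y] .
    ultimately show ?thesis using disjointD[OF disj[OF i]] by blast
  qed
  then show "is_initial C W"
    using coproduct_of_initials_initial[OF pullback_of_coproduct[OF cp x' pb]] by blast
qed

lemma coproduct_in_injection:
  assumes cp: "is_coproduct C I X P \<iota>" and i: "i \<in> I"
  shows "is_coproduct_injection C (\<iota> i)"
proof -
  have "\<And>j. j \<in> I \<Longrightarrow> X j \<in> Ob C" using cp unfolding is_coproduct_def by blast
  then obtain R \<kappa> where cpR: "is_coproduct C (I - {i}) X R \<kappa>"
    using coproduct_exists[of "I - {i}" X] by blast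
  moreover obtain r where "r \<in> hom C R P" "\<forall>j\<in>I - {i}. r \<cdot> \<kappa> j = \<iota> j"
    using coproduct_copairing[OF cpR coproduct_ob[OF cp], of \<iota>] coproduct_in_hom[OF cp] by blast
  ultimately show ?thesis
    using binary_coproduct_in0_injection coproduct_split_off_summand[OF cp i] by blast
qed

lemma coproduct_injectionE:
  "is_coproduct_injection C m \<Longrightarrow> (\<And>B n. binary_coproduct C (Dom C m) B (Cod C m) m n \<Longrightarrow> thesis) \<Longrightarrow> thesis"
  unfolding is_coproduct_injection_def by blast

lemma coproduct_injection_comp:
  assumes "is_coproduct_injection C m" and "is_coproduct_injection C n" and mn: "Cod C m = Dom C n"
  shows "is_coproduct_injection C (n \<cdot> m)"
proof -
  obtain A' m' where cm: "binary_coproduct C (Dom C m) A' (Cod C m) m m'"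
    using coproduct_injectionE[OF assms(1)] by blast
  obtain B' n' where cn: "binary_coproduct C (Cod C m) B' (Cod C n) n n'"
    using coproduct_injectionE[OF assms(2)] unfolding mn by blast
  obtain R k0 k1 where cR: "binary_coproduct C A' B' R k0 k1"
    using binary_coproduct_exists hom_ob binary_coproduct_in1[OF cm] binary_coproduct_in1[OF cn] by meson
  obtain r where "r \<in> hom C R (Cod C n)" "r \<cdot> k0 = n \<cdot> m'" "r \<cdot> k1 = n'"
    using binary_coproduct_copairing[OF cR comp_hom[OF binary_coproduct_in1[OF cm] binary_coproduct_in0[OF cn]]
        binary_coproduct_in1[OF cn]] by blast
  then show ?thesis
    using binary_coproduct_in0_injection binary_coproduct_assoc[OF cm cn cR] by blast
qed

lemma disjoint_morphsI:
  assumes f: "is_coproduct_injection C f" and g: "g \<in> Ar C" "Cod C g = Cod C f" and disj: "disjoint f g"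
  shows "disjoint_morphs C f g"
proof -
  obtain B n where cf: "binary_coproduct C (Dom C f) B (Cod C f) f n"
    using coproduct_injectionE[OF f] by blast
  have "g \<in> hom C (Dom C g) (Cod C f)" using g by (simp add: hom_def)
  then obtain Y p q where "\<forall>i\<in>{0::nat,1}. is_pullback C (if i = 0 then f else n) g (Y i) (p i) (q i)"
    using coproduct_pullbacks_exist[OF cf] by blast
  then have pb: "is_pullback C f g (Y 0) (p 0) (q 0)" by auto
  then have "is_initial C (Y 0)" using pullbackD[OF pb] disjointD[OF disj] by blast
  then show ?thesis unfolding disjoint_morphs_def using pb by blast
qed

end

locale hyperextensive_endofunctor = hyperextensive C for C :: "('o, 'm) cat" +
  fixes FO :: "'o \<Rightarrow> 'o" and FA :: "'m \<Rightarrow> 'm"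
  assumes endofunctor: "is_endofunctor C FO FA"
    and preserves_coproducts: "preserves_countable_coproducts C FO FA"
begin

lemma F_hom: "f \<in> hom C a b \<Longrightarrow> FA f \<in> hom C (FO a) (FO b)"
  using endofunctor unfolding is_endofunctor_def by blast

lemma F_comp: "f \<in> hom C a b \<Longrightarrow> g \<in> hom C b c \<Longrightarrow> FA (g \<cdot> f) = FA g \<cdot> FA f"
  using endofunctor unfolding is_endofunctor_def by blast

lemma F_coproduct: "is_coproduct C I X P \<iota> \<Longrightarrow> is_coproduct C I (\<lambda>i. FO (X i)) (FO P) (\<lambda>i. FA (\<iota> i))"
  using preserves_coproducts unfolding preserves_countable_coproducts_def by blast

lemma F_binary_coproduct:
  "binary_coproduct C A B P i0 i1 \<Longrightarrow> binary_coproduct C (FO A) (FO B) (FO P) (FA i0) (FA i1)"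
  by (drule F_coproduct, erule coproduct_cong) auto

text \<open>A map disjoint from a summand factors through its complement, and \<open>F\<close> preserves
  the disjointness of the two injections.\<close>

lemma F_disjoint:
  assumes m: "is_coproduct_injection C m" and g: "g \<in> Ar C" "Cod C g = Cod C m" and disj: "disjoint m g"
  shows "disjoint (FA m) (FA g)"
proof -
  obtain B n where cm: "binary_coproduct C (Dom C m) B (Cod C m) m n"
    using coproduct_injectionE[OF m] by blast
  have "g \<in> hom C (Dom C g) (Cod C m)" using g by (simp add: hom_def)
  then obtain h where h: "h \<in> hom C (Dom C g) B" "g = n \<cdot> h"
    using factor_through_complement[OF cm _ disj] by blast
  have n: "n \<in> hom C B (Cod C m)" using binary_coproduct_in1[OF cm] .
  have "disjoint (FA m) (FA n \<cdot> FA h)"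
    using disjoint_comp_right[OF binary_coproduct_ins_disjoint[OF F_binary_coproduct[OF cm]]]
      F_hom[OF n] F_hom[OF h(1)] by (simp add: hom_def)
  then show ?thesis using F_comp[OF h(1) n] h(2) by simp
qed

end

section \<open>The layers of a flat equation\<close>

locale flat_equation = hyperextensive_endofunctor C FO FA for C :: "('o, 'm) cat" and FO FA +
  fixes A X S j0 j1 e XH XA eH eA qH qA
  assumes S: "binary_coproduct C (FO X) A S j0 j1" and e: "e \<in> hom C X S"
    and pullback_H: "is_pullback C j0 e XH eH qH" and pullback_A: "is_pullback C j1 e XA eA qA"
begin

lemma j0: "j0 \<in> hom C (FO X) S" using binary_coproduct_in0[OF S] .
lemma j1: "j1 \<in> hom C A S" using binary_coproduct_in1[OF S] .
lemma eH: "eH \<in> hom C XH (FO X)" using pullbackD[OF pullback_H] homD[OF j0] by simp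
lemma eA: "eA \<in> hom C XA A" using pullbackD[OF pullback_A] homD[OF j1] by simp
lemma e_qH: "e \<cdot> qH = j0 \<cdot> eH" using pullbackD[OF pullback_H] by simp
lemma e_qA: "e \<cdot> qA = j1 \<cdot> eA" using pullbackD[OF pullback_A] by simp

lemma X_coproduct: "binary_coproduct C XH XA X qH qA"
  by (rule pullback_of_coproduct[OF S e, where p = "\<lambda>i. if i = 0 then eH else eA"])
    (auto simp: pullback_H pullback_A)

lemma qH: "qH \<in> hom C XH X" using binary_coproduct_in0[OF X_coproduct] .
lemma qA: "qA \<in> hom C XA X" using binary_coproduct_in1[OF X_coproduct] .
lemma X: "X \<in> Ob C" using hom_ob[OF qH] by blast

definition layer_pullback :: "'m \<Rightarrow> 'm \<times> 'm" where
  "layer_pullback m = (SOME ty. is_pullback C (FA m) eH (Dom C (snd ty)) (fst ty) (snd ty)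
                              \<and> is_coproduct_injection C (snd ty))"

lemma layer_pullback:
  assumes m: "is_coproduct_injection C m" "Cod C m = X"
  shows "is_pullback C (FA m) eH (Dom C (snd (layer_pullback m))) (fst (layer_pullback m)) (snd (layer_pullback m))
    \<and> is_coproduct_injection C (snd (layer_pullback m))"
proof -
  obtain B n where "binary_coproduct C (Dom C m) B X m n" using coproduct_injectionE[OF m(1)] m(2) by metis
  note Fm = F_binary_coproduct[OF this]
  obtain Y p q where pb: "\<forall>i\<in>{0::nat,1}. is_pullback C (if i = 0 then FA m else FA n) eH (Y i) (p i) (q i)"
    using coproduct_pullbacks_exist[OF Fm eH] by blast
  then have pb0: "is_pullback C (FA m) eH (Y 0) (p 0) (q 0)" by auto
  have "Dom C (q 0) = Y 0" using pullbackD[OF pb0] homD by blast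
  moreover have "is_coproduct_injection C (q 0)"
    using coproduct_in_injection[OF pullback_of_coproduct[OF Fm eH pb]] by simp
  ultimately have "\<exists>ty. is_pullback C (FA m) eH (Dom C (snd ty)) (fst ty) (snd ty) \<and> is_coproduct_injection C (snd ty)"
    using pb0 by (intro exI[of _ "(p 0, q 0)"]) simp
  from someI_ex[OF this] show ?thesis unfolding layer_pullback_def .
qed

text \<open>Layer \<open>n\<close> consists of the states of \<open>X\<close> that reach \<open>A\<close> after exactly \<open>n\<close> steps of \<open>e\<close>.\<close>

primrec layer_inj :: "nat \<Rightarrow> 'm" where
  "layer_inj 0 = qA"
| "layer_inj (Suc n) = qH \<cdot> snd (layer_pullback (layer_inj n))"

definition layer :: "nat \<Rightarrow> 'o" where "layer n = Dom C (layer_inj n)"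
definition layer_step :: "nat \<Rightarrow> 'm" where "layer_step n = fst (layer_pullback (layer_inj n))"
definition layer_incl :: "nat \<Rightarrow> 'm" where "layer_incl n = snd (layer_pullback (layer_inj n))"

lemma layer_inj_Suc [simp]: "layer_inj (Suc n) = qH \<cdot> layer_incl n"
  by (simp add: layer_incl_def)

declare layer_inj.simps(2) [simp del]

lemma layer_inj: "is_coproduct_injection C (layer_inj n) \<and> layer_inj n \<in> hom C (layer n) X"
proof (induction n)
  case 0
  show ?case using binary_coproduct_in0_injection[OF binary_coproduct_swap[OF X_coproduct]] qA by (simp add: layer_def hom_def)
next
  case (Suc n)
  then have "is_coproduct_injection C (layer_inj n)" "Cod C (layer_inj n) = X" by (auto simp: hom_def)
  note pb = layer_pullback[OF this]
  have y: "layer_incl n \<in> hom C (Dom C (layer_incl n)) XH"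
    using pullbackD[OF conjunct1[OF pb]] homD[OF eH] by (simp add: layer_incl_def)
  have "is_coproduct_injection C (qH \<cdot> layer_incl n)"
    by (rule coproduct_injection_comp)
      (use pb y qH binary_coproduct_in0_injection[OF X_coproduct] in \<open>auto simp: layer_incl_def hom_def\<close>)
  moreover have "qH \<cdot> layer_incl n \<in> hom C (Dom C (layer_incl n)) X" using comp_hom[OF y qH] .
  ultimately show ?case by (simp add: layer_incl_def layer_def hom_def)
qed

lemma layer_inj_hom: "layer_inj n \<in> hom C (layer n) X"
  using layer_inj by blast

lemma layer_ob: "layer n \<in> Ob C"
  using hom_ob layer_inj_hom by blast

lemma layer_step_pullback: "is_pullback C (FA (layer_inj n)) eH (layer (Suc n)) (layer_step n) (layer_incl n)"
proof -
  have "Cod C (layer_inj n) = X" using layer_inj_hom homD by blast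
  note pb = layer_pullback[OF conjunct1[OF layer_inj] this]
  have "layer_incl n \<in> hom C (Dom C (layer_incl n)) XH"
    using pullbackD[OF conjunct1[OF pb]] homD[OF eH] by (simp add: layer_incl_def)
  then have "layer (Suc n) = Dom C (layer_incl n)" using qH by (simp add: layer_def layer_incl_def hom_def)
  then show ?thesis using pb by (simp add: layer_step_def layer_incl_def)
qed

lemma layer_incl: "layer_incl n \<in> hom C (layer (Suc n)) XH"
  using pullbackD[OF layer_step_pullback] homD[OF eH] by simp

lemma layer_step: "layer_step n \<in> hom C (layer (Suc n)) (FO (layer n))"
  using pullbackD[OF layer_step_pullback] homD[OF F_hom[OF layer_inj_hom]] by simp

lemma layer_step_square: "FA (layer_inj n) \<cdot> layer_step n = eH \<cdot> layer_incl n"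
  using pullbackD[OF layer_step_pullback] by simp

lemma layer_inj_Suc_disjoint:
  assumes disj: "disjoint (FA (layer_inj i)) (FA (layer_inj k))"
  shows "disjoint (layer_inj (Suc i)) (layer_inj (Suc k))"
  unfolding disjoint_def
proof (intro allI impI)
  fix W x y assume x: "x \<in> hom C W (Dom C (layer_inj (Suc i)))" and y: "y \<in> hom C W (Dom C (layer_inj (Suc k)))"
    and eq: "layer_inj (Suc i) \<cdot> x = layer_inj (Suc k) \<cdot> y"
  have x': "x \<in> hom C W (layer (Suc i))" and y': "y \<in> hom C W (layer (Suc k))"
    using x y by (simp_all add: layer_def)
  have "qH \<cdot> layer_incl i \<cdot> x = qH \<cdot> layer_incl k \<cdot> y"
    using eq x' y' layer_incl qH by (simp add: hom_def)
  then have "layer_incl i \<cdot> x = layer_incl k \<cdot> y"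
    using monoD[OF binary_coproduct_in0_mono[OF X_coproduct]] comp_hom[OF x' layer_incl]
      comp_hom[OF y' layer_incl] homD[OF qH] by simp
  moreover have "FA (layer_inj j) \<cdot> layer_step j \<cdot> z = eH \<cdot> layer_incl j \<cdot> z"
    if "z \<in> hom C W (layer (Suc j))" for j z
    using comp_square[OF layer_step_square that layer_step F_hom[OF layer_inj_hom] layer_incl eH] .
  ultimately have "FA (layer_inj i) \<cdot> layer_step i \<cdot> x = FA (layer_inj k) \<cdot> layer_step k \<cdot> y"
    using x' y' by simp
  moreover have "layer_step i \<cdot> x \<in> hom C W (Dom C (FA (layer_inj i)))"
    and "layer_step k \<cdot> y \<in> hom C W (Dom C (FA (layer_inj k)))"
    using comp_hom[OF x' layer_step] comp_hom[OF y' layer_step] F_hom[OF layer_inj_hom] homD by metis+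
  ultimately show "is_initial C W" using disjointD[OF disj] by blast
qed

lemma layers_disjoint: "i \<noteq> j \<Longrightarrow> disjoint (layer_inj i) (layer_inj j)"
proof (induction i arbitrary: j)
  have "disjoint qA (qH \<cdot> layer_incl k)" for k
    using disjoint_comp_right[OF disjoint_sym[OF binary_coproduct_ins_disjoint[OF X_coproduct]]]
      qH layer_incl homD by metis
  note first_layer_disjoint = this
  {
    case 0
    then obtain k where "j = Suc k" by (cases j) auto
    then show ?case using first_layer_disjoint by simp
  next
    case (Suc i)
    show ?case
    proof (cases j)
      case 0
      then show ?thesis using first_layer_disjoint disjoint_sym by simp
    next
      case (Suc k)
      with Suc.prems have "disjoint (FA (layer_inj i)) (FA (layer_inj k))"
        using F_disjoint[OF conjunct1[OF layer_inj] _ _ Suc.IH] layer_inj_hom[of i] layer_inj_hom[of k]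
        by (simp add: hom_def)
      then show ?thesis
        using Suc layer_inj_Suc_disjoint by blast
    qed
  }
qed

lemma layers_complement:
  obtains P \<kappa> U Z z where "is_coproduct C UNIV layer P \<kappa>" "U \<in> hom C P X"
    "\<forall>n. U \<cdot> \<kappa> n = layer_inj n" "binary_coproduct C P Z X U z"
proof -
  obtain P \<kappa> where cp: "is_coproduct C UNIV layer P \<kappa>" using coproduct_exists layer_ob by blast
  obtain U where U: "U \<in> hom C P X" "\<forall>n. U \<cdot> \<kappa> n = layer_inj n"
    using coproduct_copairing[OF cp X] layer_inj_hom by blast
  have "\<forall>i\<in>UNIV. \<forall>j\<in>UNIV. i \<noteq> j \<longrightarrow> disjoint_morphs C (layer_inj i) (layer_inj j)"
    using disjoint_morphsI[OF conjunct1[OF layer_inj] _ _ layers_disjoint] layer_inj_hom by (simp add: hom_def)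
  then have "is_coproduct_injection C U"
    using hyper_extensive cp X layer_inj U unfolding hyper_extensive_def coproducts_coherent_def by blast
  then obtain Z z where "binary_coproduct C P Z X U z"
    using coproduct_injectionE homD[OF U(1)] by metis
  with cp U that show thesis by blast
qed

end

locale complemented_flat_equation = flat_equation +
  fixes P \<kappa> U Z z
  assumes layers_coproduct: "is_coproduct C UNIV layer P \<kappa>"
    and U: "U \<in> hom C P X" and U_layer: "U \<cdot> \<kappa> n = layer_inj n"
    and X_decomposition: "binary_coproduct C P Z X U z"
begin

lemma z: "z \<in> hom C Z X" using binary_coproduct_in1[OF X_decomposition] .
lemma \<kappa>: "\<kappa> n \<in> hom C (layer n) P" using coproduct_in_hom[OF layers_coproduct] by simp

lemma layer_inj_disjoint_complement: "disjoint (layer_inj n) z"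
proof -
  have "disjoint z (U \<cdot> \<kappa> n)"
    using disjoint_comp_right[OF disjoint_sym[OF binary_coproduct_ins_disjoint[OF X_decomposition]]] U \<kappa> homD
    by metis
  then show ?thesis using U_layer disjoint_sym by simp
qed

lemma complement_in_XH:
  obtains zH where "zH \<in> hom C Z XH" "z = qH \<cdot> zH"
  using factor_through_complement[OF binary_coproduct_swap[OF X_coproduct] z]
    layer_inj_disjoint_complement[of 0] that by auto

text \<open>A state of the complement whose successor lies in a layer would itself lie in the next layer.\<close>

lemma F_layer_inj_disjoint_complement:
  assumes zH: "zH \<in> hom C Z XH" "z = qH \<cdot> zH"
  shows "disjoint (FA (layer_inj n)) (eH \<cdot> zH)"
  unfolding disjoint_def
proof (intro allI impI)
  fix W x y assume x: "x \<in> hom C W (Dom C (FA (layer_inj n)))" and y: "y \<in> hom C W (Dom C (eH \<cdot> zH))"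
    and eq: "FA (layer_inj n) \<cdot> x = (eH \<cdot> zH) \<cdot> y"
  have y': "y \<in> hom C W Z" using y zH(1) eH by (simp add: hom_def)
  have "FA (layer_inj n) \<cdot> x = eH \<cdot> (zH \<cdot> y)" using eq zH(1) eH y' by (simp add: hom_def)
  moreover have "zH \<cdot> y \<in> hom C W (Dom C eH)" using comp_hom[OF y' zH(1)] eH by (simp add: hom_def)
  ultimately obtain w where w: "w \<in> hom C W (layer (Suc n))" "layer_incl n \<cdot> w = zH \<cdot> y"
    using pullback_factor[OF layer_step_pullback x] by blast
  have "layer_inj (Suc n) \<cdot> w = z \<cdot> y"
    using w zH y' layer_incl qH by (simp add: hom_def)
  moreover have "w \<in> hom C W (Dom C (layer_inj (Suc n)))" "y \<in> hom C W (Dom C z)"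
    using w(1) y' z layer_incl qH by (simp_all add: hom_def)
  ultimately show "is_initial C W" using disjointD[OF layer_inj_disjoint_complement] by blast
qed

lemma complement_coalgebra:
  obtains zH ez where "zH \<in> hom C Z XH" "z = qH \<cdot> zH" "ez \<in> hom C Z (FO Z)" "FA z \<cdot> ez = eH \<cdot> zH"
proof -
  obtain zH where zH: "zH \<in> hom C Z XH" "z = qH \<cdot> zH" using complement_in_XH .
  have g: "eH \<cdot> zH \<in> hom C Z (FO X)" using comp_hom[OF zH(1) eH] .
  have "FA U \<cdot> FA (\<kappa> n) = FA (layer_inj n)" for n using F_comp[OF \<kappa> U] U_layer by simp
  then have "disjoint (FA U) (eH \<cdot> zH)"
    using disjoint_copairing[OF F_coproduct[OF layers_coproduct] F_hom[OF U]]
      F_layer_inj_disjoint_complement[OF zH] g by (simp add: hom_def)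
  then obtain ez where "ez \<in> hom C Z (FO Z)" "eH \<cdot> zH = FA z \<cdot> ez"
    using factor_through_complement[OF F_binary_coproduct[OF X_decomposition] g] by blast
  with zH that show thesis by simp
qed

lemma eq_on_layers_and_complementI:
  assumes f: "f \<in> hom C X Q" and g: "g \<in> hom C X Q"
    and layers: "\<And>n. f \<cdot> layer_inj n = g \<cdot> layer_inj n" and complement: "f \<cdot> z = g \<cdot> z"
  shows "f = g"
proof -
  have "f \<cdot> U = g \<cdot> U"
  proof (rule coproduct_eqI[OF layers_coproduct comp_hom[OF U f] comp_hom[OF U g]])
    fix n
    have "(f \<cdot> U) \<cdot> \<kappa> n = f \<cdot> layer_inj n" "(g \<cdot> U) \<cdot> \<kappa> n = g \<cdot> layer_inj n"
      using U_layer[of n] f g U \<kappa> by (simp_all add: hom_def)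
    then show "(f \<cdot> U) \<cdot> \<kappa> n = (g \<cdot> U) \<cdot> \<kappa> n" using layers by simp
  qed
  then show ?thesis using binary_coproduct_eqI[OF X_decomposition f g] complement by blast
qed

context
  fixes a zH ez
  assumes a: "a \<in> hom C (FO A) A"
    and zH: "zH \<in> hom C Z XH" and z_zH: "z = qH \<cdot> zH"
    and ez: "ez \<in> hom C Z (FO Z)" and ez_square: "FA z \<cdot> ez = eH \<cdot> zH"
begin

primrec layer_solution where
  "layer_solution 0 = eA"
| "layer_solution (Suc n) = a \<cdot> FA (layer_solution n) \<cdot> layer_step n"

lemma layer_solution: "layer_solution n \<in> hom C (layer n) A"
proof (induction n)
  case 0
  show ?case using eA qA by (simp add: layer_def hom_def)
next
  case (Suc n)
  then show ?case using comp_hom[OF comp_hom[OF layer_step F_hom[OF Suc]] a] by simp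
qed

lemma comp_e_on_summands:
  assumes s: "s \<in> hom C X A" and u: "u \<in> hom C S A" "u \<cdot> j0 = a \<cdot> FA s" "u \<cdot> j1 = Idt C A"
  shows "(u \<cdot> e) \<cdot> qA = eA"
    and "(u \<cdot> e) \<cdot> layer_inj (Suc n) = a \<cdot> FA (s \<cdot> layer_inj n) \<cdot> layer_step n"
    and "(u \<cdot> e) \<cdot> z = a \<cdot> FA (s \<cdot> z) \<cdot> ez"
proof -
  have "(u \<cdot> e) \<cdot> qA = (u \<cdot> j1) \<cdot> eA" using u(1) e qA j1 eA e_qA by (simp add: hom_def)
  then show "(u \<cdot> e) \<cdot> qA = eA" using u(3) eA by (simp add: hom_def)
  have ue_qH: "(u \<cdot> e) \<cdot> qH \<cdot> h = a \<cdot> FA s \<cdot> eH \<cdot> h" if h: "h \<in> hom C W XH" for W h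
  proof -
    have "(u \<cdot> e) \<cdot> qH \<cdot> h = (u \<cdot> j0) \<cdot> eH \<cdot> h"
      using comp_square[OF e_qH h qH e eH j0] u(1) e qH j0 eH h by (simp add: hom_def)
    then show ?thesis using u(2) a s eH h F_hom[OF s] by (simp add: hom_def)
  qed
  have "a \<cdot> FA s \<cdot> eH \<cdot> layer_incl n = a \<cdot> FA s \<cdot> FA (layer_inj n) \<cdot> layer_step n"
    using layer_step_square by simp
  also have "\<dots> = a \<cdot> FA (s \<cdot> layer_inj n) \<cdot> layer_step n"
    using F_comp[OF layer_inj_hom s] a F_hom[OF s] F_hom[OF layer_inj_hom] layer_step by (simp add: hom_def)
  finally show "(u \<cdot> e) \<cdot> layer_inj (Suc n) = a \<cdot> FA (s \<cdot> layer_inj n) \<cdot> layer_step n"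
    using ue_qH[OF layer_incl] by simp
  have "a \<cdot> FA s \<cdot> eH \<cdot> zH = a \<cdot> FA s \<cdot> FA z \<cdot> ez" using ez_square by simp
  also have "\<dots> = a \<cdot> FA (s \<cdot> z) \<cdot> ez"
    using F_comp[OF z s] a F_hom[OF s] F_hom[OF z] ez by (simp add: hom_def)
  finally show "(u \<cdot> e) \<cdot> z = a \<cdot> FA (s \<cdot> z) \<cdot> ez"
    using ue_qH[OF zH] z_zH by simp
qed

lemma solves_flat_equation_iff:
  assumes s: "s \<in> hom C X A" and u: "u \<in> hom C S A" "u \<cdot> j0 = a \<cdot> FA s" "u \<cdot> j1 = Idt C A"
  shows "s = u \<cdot> e \<longleftrightarrow>
    s \<cdot> qA = eA \<and> (\<forall>n. s \<cdot> layer_inj (Suc n) = a \<cdot> FA (s \<cdot> layer_inj n) \<cdot> layer_step n)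
    \<and> s \<cdot> z = a \<cdot> FA (s \<cdot> z) \<cdot> ez"
  (is "_ \<longleftrightarrow> ?layer0 \<and> ?layers \<and> ?complement")
proof
  assume "s = u \<cdot> e"
  then show "?layer0 \<and> ?layers \<and> ?complement" using comp_e_on_summands[OF s u] by simp
next
  assume eqs: "?layer0 \<and> ?layers \<and> ?complement"
  show "s = u \<cdot> e"
  proof (rule eq_on_layers_and_complementI[OF s comp_hom[OF e u(1)]])
    show "s \<cdot> layer_inj n = (u \<cdot> e) \<cdot> layer_inj n" for n
      using eqs comp_e_on_summands[OF s u] by (cases n) simp_all
    show "s \<cdot> z = (u \<cdot> e) \<cdot> z" using eqs comp_e_on_summands[OF s u] by simp
  qed
qed


lemma cia_condition_iff:
  assumes s: "s \<in> hom C X A"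
  shows "(\<forall>u. u \<in> hom C S A \<longrightarrow> u \<cdot> j0 = a \<cdot> FA s \<longrightarrow> u \<cdot> j1 = Idt C A \<longrightarrow> s = u \<cdot> e) \<longleftrightarrow>
    s \<cdot> qA = eA \<and> (\<forall>n. s \<cdot> layer_inj (Suc n) = a \<cdot> FA (s \<cdot> layer_inj n) \<cdot> layer_step n)
    \<and> s \<cdot> z = a \<cdot> FA (s \<cdot> z) \<cdot> ez"
proof -
  obtain u where u: "u \<in> hom C S A" "u \<cdot> j0 = a \<cdot> FA s" "u \<cdot> j1 = Idt C A"
    using binary_coproduct_copairing[OF S comp_hom[OF F_hom[OF s] a] id_hom] hom_ob[OF a] by blast
  then show ?thesis using solves_flat_equation_iff[OF s] by blast
qed

context
  assumes corecursive: "corecursive C FO FA A a"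
begin

lemma complement_solution:
  obtains sZ where "sZ \<in> hom C Z A" "sZ = a \<cdot> FA sZ \<cdot> ez"
    "\<And>t. t \<in> hom C Z A \<Longrightarrow> t = a \<cdot> FA t \<cdot> ez \<Longrightarrow> t = sZ"
proof -
  have "\<exists>!t. t \<in> hom C Z A \<and> t = a \<cdot> FA t \<cdot> ez"
    using corecursive[unfolded corecursive_def, rule_format, OF _ ez] hom_ob[OF ez] by blast
  with that show thesis by blast
qed

lemma layerwise_solution_exists:
  "\<exists>s. s \<in> hom C X A \<and> s \<cdot> qA = eA
     \<and> (\<forall>n. s \<cdot> layer_inj (Suc n) = a \<cdot> FA (s \<cdot> layer_inj n) \<cdot> layer_step n)
     \<and> s \<cdot> z = a \<cdot> FA (s \<cdot> z) \<cdot> ez"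
proof -
  obtain sZ where sZ: "sZ \<in> hom C Z A" "sZ = a \<cdot> FA sZ \<cdot> ez" using complement_solution by blast
  obtain sP where sP: "sP \<in> hom C P A" "\<forall>n. sP \<cdot> \<kappa> n = layer_solution n"
    using coproduct_copairing[OF layers_coproduct] hom_ob[OF a] layer_solution by blast
  obtain s where s: "s \<in> hom C X A" "s \<cdot> U = sP" "s \<cdot> z = sZ"
    using binary_coproduct_copairing[OF X_decomposition sP(1) sZ(1)] by blast
  have s_layer: "s \<cdot> layer_inj n = layer_solution n" for n
  proof -
    have "s \<cdot> layer_inj n = (s \<cdot> U) \<cdot> \<kappa> n" using U_layer[of n] s(1) U \<kappa> by (simp add: hom_def)
    then show ?thesis using s(2) sP(2) by simp
  qed
  have "s \<cdot> qA = eA" using s_layer[of 0] by simp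
  moreover have "\<forall>n. s \<cdot> layer_inj (Suc n) = a \<cdot> FA (s \<cdot> layer_inj n) \<cdot> layer_step n"
    by (simp add: s_layer del: layer_inj_Suc)
  moreover have "s \<cdot> z = a \<cdot> FA (s \<cdot> z) \<cdot> ez" using s(3) sZ(2) by simp
  ultimately show ?thesis using s(1) by blast
qed

lemma layerwise_solution_unique:
  assumes s: "s \<in> hom C X A" "s \<cdot> qA = eA"
      "\<forall>n. s \<cdot> layer_inj (Suc n) = a \<cdot> FA (s \<cdot> layer_inj n) \<cdot> layer_step n" "s \<cdot> z = a \<cdot> FA (s \<cdot> z) \<cdot> ez"
    and t: "t \<in> hom C X A" "t \<cdot> qA = eA"
      "\<forall>n. t \<cdot> layer_inj (Suc n) = a \<cdot> FA (t \<cdot> layer_inj n) \<cdot> layer_step n" "t \<cdot> z = a \<cdot> FA (t \<cdot> z) \<cdot> ez"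
  shows "s = t"
proof (rule eq_on_layers_and_complementI[OF s(1) t(1)])
  show "s \<cdot> layer_inj n = t \<cdot> layer_inj n" for n
    by (induction n) (simp_all add: s(2,3) t(2,3) del: layer_inj_Suc)
  obtain sZ where "\<And>r. r \<in> hom C Z A \<Longrightarrow> r = a \<cdot> FA r \<cdot> ez \<Longrightarrow> r = sZ"
    using complement_solution by blast
  then show "s \<cdot> z = t \<cdot> z" using comp_hom[OF z s(1)] comp_hom[OF z t(1)] s(4) t(4) by metis
qed

end

end

lemma flat_equation_unique_solution:
  assumes a: "a \<in> hom C (FO A) A" and corecursive: "corecursive C FO FA A a"
  shows "\<exists>!s. s \<in> hom C X A \<and> (\<forall>u. u \<in> hom C S A \<longrightarrow> u \<cdot> j0 = a \<cdot> FA s \<longrightarrow> u \<cdot> j1 = Idt C A \<longrightarrow> s = u \<cdot> e)"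
proof -
  obtain zH ez where coalg: "zH \<in> hom C Z XH" "z = qH \<cdot> zH" "ez \<in> hom C Z (FO Z)" "FA z \<cdot> ez = eH \<cdot> zH"
    using complement_coalgebra by blast
  note iff = cia_condition_iff[OF a coalg]
  obtain s where s: "s \<in> hom C X A" "s \<cdot> qA = eA"
      "\<forall>n. s \<cdot> layer_inj (Suc n) = a \<cdot> FA (s \<cdot> layer_inj n) \<cdot> layer_step n" "s \<cdot> z = a \<cdot> FA (s \<cdot> z) \<cdot> ez"
    using layerwise_solution_exists[OF a coalg corecursive] by blast
  show ?thesis
  proof (rule ex1I[of _ s])
    fix t assume "t \<in> hom C X A \<and>
      (\<forall>u. u \<in> hom C S A \<longrightarrow> u \<cdot> j0 = a \<cdot> FA t \<longrightarrow> u \<cdot> j1 = Idt C A \<longrightarrow> t = u \<cdot> e)"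
    then show "t = s"
      using layerwise_solution_unique[OF a coalg corecursive _ _ _ _ s] iff by blast
  qed (use s iff in blast)
qed

end

section \<open>Corecursive algebras and cias\<close>

context hyperextensive_endofunctor
begin

lemma corecursive_imp_cia:
  assumes a: "a \<in> hom C (FO A) A" and cor: "corecursive C FO FA A a"
  shows "is_cia C FO FA A a"
  unfolding is_cia_def
proof (intro allI impI)
  fix X S \<iota> e
  assume cp: "is_coproduct C {0, 1} (\<lambda>i. if i = 0 then FO X else A) S \<iota>" and e: "e \<in> hom C X S"
  have S: "binary_coproduct C (FO X) A S (\<iota> 0) (\<iota> 1)" by (rule coproduct_cong[OF cp]) auto
  obtain Y p q where "\<forall>i\<in>{0::nat, 1}. is_pullback C (if i = 0 then \<iota> 0 else \<iota> 1) e (Y i) (p i) (q i)"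
    using coproduct_pullbacks_exist[OF S e] by blast
  then interpret flat_equation C FO FA A X S "\<iota> 0" "\<iota> 1" e "Y 0" "Y 1" "p 0" "p 1" "q 0" "q 1"
    using S e by unfold_locales auto
  obtain P \<kappa> U Z z where "is_coproduct C UNIV layer P \<kappa>" "U \<in> hom C P X"
    "\<forall>n. U \<cdot> \<kappa> n = layer_inj n" "binary_coproduct C P Z X U z"
    by (rule layers_complement)
  then interpret complemented_flat_equation C FO FA A X S "\<iota> 0" "\<iota> 1" e "Y 0" "Y 1" "p 0" "p 1" "q 0" "q 1"
      P \<kappa> U Z z
    by unfold_locales blast+
  show "\<exists>!s. s \<in> hom C X A \<and>
    (\<forall>u. u \<in> hom C S A \<longrightarrow> u \<cdot> \<iota> 0 = a \<cdot> FA s \<longrightarrow> u \<cdot> \<iota> 1 = Idt C A \<longrightarrow> s = u \<cdot> e)"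
    using flat_equation_unique_solution[OF a cor] .
qed

lemma cia_condition_inl_iff:
  assumes S: "binary_coproduct C (FO X) A S i0 i1" and a: "a \<in> hom C (FO A) A"
    and s: "s \<in> hom C X A" and e: "e \<in> hom C X (FO X)"
  shows "(\<forall>u. u \<in> hom C S A \<longrightarrow> u \<cdot> i0 = a \<cdot> FA s \<longrightarrow> u \<cdot> i1 = Idt C A \<longrightarrow> s = u \<cdot> i0 \<cdot> e)
    \<longleftrightarrow> s = a \<cdot> FA s \<cdot> e"
proof -
  have as: "a \<cdot> FA s \<in> hom C (FO X) A" using comp_hom[OF F_hom[OF s] a] .
  obtain u0 where u0: "u0 \<in> hom C S A" "u0 \<cdot> i0 = a \<cdot> FA s" "u0 \<cdot> i1 = Idt C A"
    using binary_coproduct_copairing[OF S as id_hom] hom_ob[OF a] by blast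
  have ue: "u \<cdot> i0 \<cdot> e = a \<cdot> FA s \<cdot> e" if "u \<in> hom C S A" "u \<cdot> i0 = a \<cdot> FA s" for u
    using comp_square[OF that(2) e binary_coproduct_in0[OF S] that(1) F_hom[OF s] a] .
  show ?thesis
  proof
    assume "\<forall>u. u \<in> hom C S A \<longrightarrow> u \<cdot> i0 = a \<cdot> FA s \<longrightarrow> u \<cdot> i1 = Idt C A \<longrightarrow> s = u \<cdot> i0 \<cdot> e"
    then have "s = u0 \<cdot> i0 \<cdot> e" using u0 by blast
    then show "s = a \<cdot> FA s \<cdot> e" using ue[OF u0(1,2)] by simp
  qed (use ue in auto)
qed

lemma cia_imp_corecursive:
  assumes a: "a \<in> hom C (FO A) A" and cia: "is_cia C FO FA A a"
  shows "corecursive C FO FA A a"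
  unfolding corecursive_def
proof (intro allI impI)
  fix X e assume X: "X \<in> Ob C" and e: "e \<in> hom C X (FO X)"
  obtain S i0 i1 where S: "binary_coproduct C (FO X) A S i0 i1"
    using binary_coproduct_exists hom_ob[OF e] hom_ob[OF a] by meson
  have "\<exists>!s. s \<in> hom C X A \<and>
      (\<forall>u. u \<in> hom C S A \<longrightarrow> u \<cdot> i0 = a \<cdot> FA s \<longrightarrow> u \<cdot> i1 = Idt C A \<longrightarrow> s = u \<cdot> i0 \<cdot> e)"
    using cia[unfolded is_cia_def, rule_format, OF X S comp_hom[OF e binary_coproduct_in0[OF S]]] by simp
  moreover have "(s \<in> hom C X A \<and>
      (\<forall>u. u \<in> hom C S A \<longrightarrow> u \<cdot> i0 = a \<cdot> FA s \<longrightarrow> u \<cdot> i1 = Idt C A \<longrightarrow> s = u \<cdot> i0 \<cdot> e))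
      \<longleftrightarrow> s \<in> hom C X A \<and> s = a \<cdot> FA s \<cdot> e" for s
    by (rule conj_cong[OF refl]) (rule cia_condition_inl_iff[OF S a _ e])
  ultimately show "\<exists>!s. s \<in> hom C X A \<and> s = a \<cdot> FA s \<cdot> e"
    by simp
qed

end

theorem mainTheorem4:
  fixes C :: "('o, 'm) cat" and FO :: "'o \<Rightarrow> 'o" and FA :: "'m \<Rightarrow> 'm"
  assumes "hyper_extensive C"
    and "is_endofunctor C FO FA"
    and "preserves_countable_coproducts C FO FA"
    and "has_terminal_coalgebra C FO FA"
  shows "(\<forall>A a. A \<in> Ob C \<longrightarrow> a \<in> hom C (FO A) A \<longrightarrow> corecursive C FO FA A a \<longrightarrow> is_cia C FO FA A a)
       \<and> (\<forall>A a. A \<in> Ob C \<longrightarrow> a \<in> hom C (FO A) A \<longrightarrow> (corecursive C FO FA A a \<longleftrightarrow> is_cia C FO FA A a))"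
proof -
  interpret hyperextensive_endofunctor C FO FA
    using assms(1-3) by unfold_locales (simp_all add: hyper_extensive_def)
  show ?thesis using corecursive_imp_cia cia_imp_corecursive by meson
qed

end
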